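(* Let $l(x)=x\,(1-2\Phi(-x))+2\phi(x)$. Then for all $x>0$, $$\frac{l(x)\,\big(\tfrac12-\Phi(-x)\big)}{x}<\frac12.$$
   Context: $\phi$ and $\Phi$ denote the standard normal density and cumulative distribution function. *)

theory Defs
  imports "HOL-Probability.Probability"
begin

definition std_normal_cdf :: "real \<Rightarrow> real" where
  "std_normal_cdf x = (LINT t:{..x}|lborel. std_normal_density t)"

definition lfun :: "real \<Rightarrow> real" where
  "lfun x = x * (1 - 2 * std_normal_cdf (- x)) + 2 * std_normal_density x"

end

theory Submission
  imports Defs "HOL-Real_Asymp.Real_Asymp"
begin

text \<open>Write \<open>q = \<Phi>(-x)\<close>. The slack \<open>x/2 - l(x)(1/2 - q)\<close> of the claim is a concave
  quadratic in \<open>q\<close> that equals \<open>x/2 > 0\<close> at \<open>q = 1/2\<close>, so it is positive on every interval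
  \<open>[L, 1/2]\<close> at whose left end it is positive. Since \<open>q < 1/2\<close>, it suffices to exhibit a lower
  bound \<open>L \<le> q\<close> with positive slack: for \<open>x \<le> 9/10\<close> the bound \<open>q \<ge> 1/2 - \<phi>(0) x\<close>
  (the density is maximal at 0) works, and for \<open>x > 9/10\<close> the Mills-ratio bound
  \<open>q \<ge> \<phi>(x) x / (x\<^sup>2 + 1)\<close> does.\<close>

lemma std_normal_density_minus: "std_normal_density (- t) = std_normal_density t"
  by (simp add: std_normal_density_def)

lemma std_normal_density_antimono:
  assumes "\<bar>s\<bar> \<le> \<bar>t\<bar>"
  shows "std_normal_density t \<le> std_normal_density s"
proof -
  have "s\<^sup>2 \<le> t\<^sup>2" using assms by (simp add: abs_le_square_iff)
  then show ?thesis by (simp add: std_normal_density_def divide_right_mono)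
qed

lemma set_integrable_std_normal_density:
  "A \<in> sets lborel \<Longrightarrow> set_integrable lborel A std_normal_density"
  unfolding set_integrable_def using integrable_mult_indicator[of A lborel std_normal_density] by simp

lemma std_normal_cdf_minus: "std_normal_cdf (- x) = (LBINT t:{x..}. std_normal_density t)"
proof -
  have "std_normal_cdf (- x) = (LBINT t:{t. - t \<in> {..- x}}. std_normal_density (- t))"
    unfolding std_normal_cdf_def by (rule set_integral_reflect)
  also have "{t. - t \<in> {..- x}} = {x..}" by auto
  finally show ?thesis by (simp add: std_normal_density_minus)
qed

lemma std_normal_cdf_minus_eq:
  assumes "x > 0"
  shows "2 * std_normal_cdf (- x) = 1 - (LBINT t:{-x<..<x}. std_normal_density t)"
proof -
  have "{..-x} \<union> {-x<..<x} \<union> {x..} = UNIV" by auto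
  then have "1 = (LBINT t:{..-x} \<union> {-x<..<x} \<union> {x..}. std_normal_density t)"
    by (simp add: set_lebesgue_integral_def)
  also have "\<dots> = (LBINT t:{..-x}. std_normal_density t) + (LBINT t:{-x<..<x}. std_normal_density t)
      + (LBINT t:{x..}. std_normal_density t)"
    using assms
    by (subst set_integral_Un set_integral_Un;
        auto intro!: set_integrable_Un set_integrable_std_normal_density)+
  finally show ?thesis by (simp add: std_normal_cdf_def flip: std_normal_cdf_minus)
qed

lemma std_normal_mass_Ioo_bounds:
  assumes "x > 0"
  shows "2 * x * std_normal_density x \<le> (LBINT t:{-x<..<x}. std_normal_density t)"
    and "(LBINT t:{-x<..<x}. std_normal_density t) \<le> 2 * x * std_normal_density 0"
proof -
  have const: "(LBINT t:{-x<..<x}. c) = 2 * x * c" for c :: real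
    using assms by (simp add: set_integral_const)
  have integrable: "set_integrable lborel {-x<..<x} (\<lambda>_. c)" for c :: real
    using assms by (simp add: set_integrable_def integrable_real_mult_indicator)
  show "2 * x * std_normal_density x \<le> (LBINT t:{-x<..<x}. std_normal_density t)"
    unfolding const[symmetric]
    by (intro set_integral_mono integrable set_integrable_std_normal_density std_normal_density_antimono) auto
  show "(LBINT t:{-x<..<x}. std_normal_density t) \<le> 2 * x * std_normal_density 0"
    unfolding const[symmetric]
    by (intro set_integral_mono integrable set_integrable_std_normal_density std_normal_density_antimono) auto
qed

lemma std_normal_cdf_minus_less_half:
  assumes "x > 0"
  shows "std_normal_cdf (- x) < 1 / 2"
proof -
  have "0 < 2 * x * std_normal_density x"
    using assms by (simp add: normal_density_pos)
  with std_normal_mass_Ioo_bounds(1)[OF assms] std_normal_cdf_minus_eq[OF assms]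
  show ?thesis by linarith
qed

lemma std_normal_cdf_minus_ge_linear:
  assumes "x > 0"
  shows "1 / 2 - x / sqrt (2 * pi) \<le> std_normal_cdf (- x)"
  using std_normal_mass_Ioo_bounds(2)[OF assms] std_normal_cdf_minus_eq[OF assms]
  by (simp add: std_normal_density_def)

lemma std_normal_density_mills_deriv:
  "((\<lambda>t. - (std_normal_density t * t / (t\<^sup>2 + 1))) has_real_derivative
     std_normal_density t * (1 - 2 / (t\<^sup>2 + 1)\<^sup>2)) (at t)"
proof -
  have pos: "t * t + 1 > (0::real)" by (simp add: add_nonneg_pos)
  have "1 + (t * (t * (t * t)) + t * (t * 2)) = (t * t + 1) * (t * t + 1)"
    by (simp add: algebra_simps)
  with pos have "1 + (t * (t * (t * t)) + t * (t * 2)) \<noteq> 0" by simp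
  with pos have "((\<lambda>t. - (c * exp (- t\<^sup>2 / 2) * t / (t\<^sup>2 + 1))) has_real_derivative
      c * exp (- t\<^sup>2 / 2) * (1 - 2 / (t\<^sup>2 + 1)\<^sup>2)) (at t)" for c
    by (auto intro!: derivative_eq_intros simp: power2_eq_square field_simps)
  from this[of "1 / sqrt (2 * pi)"] show ?thesis
    by (simp add: std_normal_density_def)
qed

text \<open>\<open>-F\<close> below is an antiderivative of a function dominated by \<open>\<phi>\<close>, and \<open>F\<close> vanishes at
  infinity.\<close>

lemma std_normal_cdf_minus_ge_mills:
  "std_normal_density x * x / (x\<^sup>2 + 1) \<le> std_normal_cdf (- x)"
proof -
  define F where "F t = - (std_normal_density t * t / (t\<^sup>2 + 1))" for t :: real
  define f where "f t = std_normal_density t * (1 - 2 / (t\<^sup>2 + 1)\<^sup>2)" for t :: real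
  have "t\<^sup>2 + 1 \<noteq> (0::real)" for t
    using zero_le_power2[of t] by linarith
  then have f_cont: "isCont f t" for t
    unfolding f_def std_normal_density_def by (intro continuous_intros) auto
  have F_deriv: "(F has_real_derivative f t) (at t)" for t
    unfolding F_def f_def by (rule std_normal_density_mills_deriv)
  have bound: "F b - F x \<le> std_normal_cdf (- x)" if "x \<le> b" for b
  proof -
    have "F b - F x = (\<integral>t. f t * indicator {x..b} t \<partial>lborel)"
      using F_deriv f_cont by (intro integral_FTC_Icc_real[symmetric] that)
    also have "\<dots> \<le> (\<integral>t. indicator {x..} t * std_normal_density t \<partial>lborel)"
    proof (rule integral_mono)
      show "integrable lborel (\<lambda>t. f t * indicator {x..b} t)"
        using f_cont by (rule borel_integrable_atLeastAtMost)
      show "integrable lborel (\<lambda>t. indicator {x..} t * std_normal_density t)"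
        using set_integrable_std_normal_density[of "{x..}"] by (simp add: set_integrable_def)
      have "f t \<le> std_normal_density t" for t
        unfolding f_def by (simp add: mult_left_le)
      then show "f t * indicator {x..b} t \<le> indicator {x..} t * std_normal_density t" for t
        by (auto split: split_indicator)
    qed
    finally show ?thesis by (simp add: std_normal_cdf_minus set_lebesgue_integral_def)
  qed
  have "(F \<longlongrightarrow> 0) at_top"
    unfolding F_def std_normal_density_def by real_asymp
  then have "((\<lambda>b. F b - F x) \<longlongrightarrow> - F x) at_top"
    using tendsto_diff[OF _ tendsto_const, of F 0 at_top "F x"] by simp
  then have "- F x \<le> std_normal_cdf (- x)"
    using eventually_mono[OF eventually_ge_at_top[of x] bound] by (rule tendsto_upperbound) auto
  then show ?thesis by (simp only: F_def minus_minus)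
qed

lemma concave_quadratic_pos_between:
  fixes a b c l r t :: real
  assumes "a \<ge> 0" "l \<le> t" "t \<le> r"
    and "b * l + c - a * l\<^sup>2 > 0" "b * r + c - a * r\<^sup>2 > 0"
  shows "b * t + c - a * t\<^sup>2 > 0"
proof (cases "l = r")
  case True
  then show ?thesis using assms by simp
next
  case False
  define f where "f s = b * s + c - a * s\<^sup>2" for s
  have "(r - l) * f t = (r - t) * f l + (t - l) * f r + a * (t - l) * (r - t) * (r - l)"
    unfolding f_def by (simp add: algebra_simps power2_eq_square)
  moreover have "(r - t) * f l + (t - l) * f r > 0"
  proof -
    have "f l > 0" "f r > 0" using assms by (simp_all add: f_def)
    moreover have "r - t > 0 \<or> t - l > 0" using assms False by linarith
    ultimately show ?thesis
      using assms by (auto intro: add_pos_nonneg add_nonneg_pos)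
  qed
  moreover have "a * (t - l) * (r - t) * (r - l) \<ge> 0"
    using assms by simp
  ultimately have "(r - l) * f t > 0" by linarith
  then show ?thesis using assms by (simp add: f_def zero_less_mult_iff)
qed

definition lfun_gap :: "real \<Rightarrow> real \<Rightarrow> real" where
  "lfun_gap x q = x / 2 - (x * (1 - 2 * q) + 2 * std_normal_density x) * (1 / 2 - q)"

lemma lfun_gap_quadratic:
  "lfun_gap x q = 2 * (x + std_normal_density x) * q + - std_normal_density x - 2 * x * q\<^sup>2"
  unfolding lfun_gap_def by (simp add: algebra_simps power2_eq_square)

lemma lfun_gap_pos_between:
  assumes "x > 0" "lfun_gap x l > 0" "l \<le> q" "q \<le> 1 / 2"
  shows "lfun_gap x q > 0"
proof -
  have "lfun_gap x (1 / 2) > 0" using assms by (simp add: lfun_gap_def)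
  with assms show ?thesis
    unfolding lfun_gap_quadratic by (intro concave_quadratic_pos_between[of "2 * x" l q "1 / 2"]) auto
qed

lemma lfun_gap_pos_small:
  assumes "0 < x" "x \<le> 9 / 10"
  shows "lfun_gap x (1 / 2 - x / sqrt (2 * pi)) > 0"
proof -
  define E where "E = exp (- x\<^sup>2 / 2)"
  have "lfun_gap x (1 / 2 - x / sqrt (2 * pi)) = x * (1 / 2 - (x\<^sup>2 + E) / pi)"
    unfolding lfun_gap_def std_normal_density_def E_def
    by (simp add: field_simps power2_eq_square)
  also have "\<dots> > 0"
  proof -
    define s where "s = x\<^sup>2"
    have "1 + s / 2 \<le> exp (s / 2)" by (rule exp_ge_add_one_self)
    then have E: "E * (1 + s / 2) \<le> 1"
      by (simp add: E_def s_def exp_minus field_simps)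
    have "s \<le> (9 / 10)\<^sup>2" unfolding s_def using assms by (intro power_mono) auto
    moreover have "0 \<le> s" by (simp add: s_def)
    ultimately have s: "0 \<le> s" "s \<le> 81 / 100" "s * s \<le> 81 / 100 * s"
      using mult_right_mono[of s "81 / 100" s] by (simp_all add: power2_eq_square)
    have "s + E < 3141 / 2000"
    proof (rule ccontr)
      assume "\<not> ?thesis"
      then have "(3141 / 2000 - s) * (1 + s / 2) \<le> E * (1 + s / 2)"
        using s by (intro mult_right_mono) auto
      with E s show False by (simp add: algebra_simps)
    qed
    moreover have "pi > 3141 / 1000" using pi_approx by simp
    ultimately have "(x\<^sup>2 + E) / pi < 1 / 2" by (simp add: s_def divide_less_eq)
    then show ?thesis using assms by simp
  qed
  finally show ?thesis .
qed

lemma lfun_gap_pos_large: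
  assumes "9 / 10 < x"
  shows "lfun_gap x (std_normal_density x * x / (x\<^sup>2 + 1)) > 0"
proof -
  define p where "p = std_normal_density x"
  have p_pos: "p > 0" unfolding p_def by (simp add: normal_density_pos)
  have D_pos: "x\<^sup>2 + 1 > 0" by (simp add: add_nonneg_pos)
  define l where "l = p * x / (x\<^sup>2 + 1)"
  have l: "l * (x\<^sup>2 + 1) = p * x" unfolding l_def using D_pos by simp
  have "lfun_gap x l * (x\<^sup>2 + 1)\<^sup>2
      = 2 * (x + p) * (l * (x\<^sup>2 + 1)) * (x\<^sup>2 + 1) - p * (x\<^sup>2 + 1)\<^sup>2 - 2 * x * (l * (x\<^sup>2 + 1))\<^sup>2"
    unfolding lfun_gap_quadratic p_def[symmetric] by (simp add: algebra_simps power2_eq_square)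
  also have "\<dots> = p * (x ^ 4 - 1 + 2 * x * p)"
    unfolding l by (simp add: algebra_simps power2_eq_square power4_eq_xxxx)
  finally have "lfun_gap x l * (x\<^sup>2 + 1)\<^sup>2 = p * (x ^ 4 - 1 + 2 * x * p)" .
  moreover have "x ^ 4 - 1 + 2 * x * p > 0"
  proof (cases "x \<ge> 1")
    case True
    then have "x ^ 4 \<ge> 1" by (simp add: one_le_power)
    with p_pos True show ?thesis by (simp add: add_nonneg_pos)
  next
    case False
    have "sqrt (2 * pi) \<le> 20 / 7"
      using pi_less_4 by (intro real_le_lsqrt) (auto simp: power2_eq_square)
    then have "1 / sqrt (2 * pi) \<ge> 7 / 20" by (simp add: field_simps)
    moreover have "exp (- x\<^sup>2 / 2) \<ge> 1 - x\<^sup>2 / 2"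
      using exp_ge_add_one_self[of "- x\<^sup>2 / 2"] by simp
    moreover have "x\<^sup>2 \<le> 1"
      using False assms by (intro power_le_one) auto
    then have "1 - x\<^sup>2 / 2 \<ge> 0" by simp
    ultimately have "p \<ge> 7 / 20 * (1 - x\<^sup>2 / 2)"
      unfolding p_def std_normal_density_def by (intro mult_mono) auto
    then have "2 * x * p \<ge> 2 * x * (7 / 20 * (1 - x\<^sup>2 / 2))"
      using assms by (intro mult_left_mono) auto
    moreover have "x ^ 3 * (x - 7 / 20) \<ge> (9 / 10) ^ 3 * (11 / 20)"
      using assms by (intro mult_mono power_mono) auto
    ultimately show ?thesis
      using assms by (simp add: algebra_simps power2_eq_square power3_eq_cube power4_eq_xxxx)
  qed
  ultimately have "lfun_gap x l * (x\<^sup>2 + 1)\<^sup>2 > 0" using p_pos by simp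
  then show ?thesis using D_pos by (simp add: l_def p_def zero_less_mult_iff)
qed

theorem lemma16:
  fixes x :: real
  assumes "x > 0"
  shows "lfun x * (1/2 - std_normal_cdf (- x)) / x < 1/2"
proof -
  define q where "q = std_normal_cdf (- x)"
  have q_less: "q < 1 / 2"
    unfolding q_def using assms by (rule std_normal_cdf_minus_less_half)
  have "lfun_gap x q > 0"
  proof (cases "x \<le> 9 / 10")
    case True
    show ?thesis
      using lfun_gap_pos_between[OF assms lfun_gap_pos_small[OF assms True]
          std_normal_cdf_minus_ge_linear[OF assms]] q_less
      unfolding q_def by linarith
  next
    case False
    then have gap_pos: "lfun_gap x (std_normal_density x * x / (x\<^sup>2 + 1)) > 0"
      by (intro lfun_gap_pos_large) simp
    show ?thesis
      using lfun_gap_pos_between[OF assms gap_pos std_normal_cdf_minus_ge_mills] q_less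
      unfolding q_def by linarith
  qed
  moreover have "lfun x * (1 / 2 - q) = x / 2 - lfun_gap x q"
    by (simp add: lfun_def lfun_gap_def q_def)
  ultimately show ?thesis
    using assms by (simp add: q_def divide_less_eq)
qed

end
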